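(* (a) Let $R$ be a commutative ring and $\mathfrak{a}\subseteq R$ an idempotent ideal. Then every $R$-module is of bounded small $\mathfrak{a}$-torsion. However, there exist a commutative ring $R$, an idempotent ideal $\mathfrak{a}$ and an $R$-module that is not of bounded large $\mathfrak{a}$-torsion; and there exist a commutative ring $R$ and an idempotent ideal $\mathfrak{a}$ such that the $R$-module $R$ is not of strongly bounded small $\mathfrak{a}$-torsion. (b) Let $R$ be a commutative ring and $\mathfrak{a}\subseteq R$ an ideal generated by idempotent elements. Then every $R$-module is of strongly bounded large $\mathfrak{a}$-torsion.
   Context: $\Gamma_\mathfrak{a}(M)=\{x\in M\mid \exists n\in\mathbb{N}:\mathfrak{a}^n\subseteq(0:_Rx)\}$, $\overline{\Gamma}_\mathfrak{a}(M)=\{x\in M\mid \mathfrak{a}\subseteq\sqrt{(0:_Rx)}\}$. An $R$-module $M$ is of strongly bounded large (resp. small) $\mathfrak{a}$-torsion if there is $n\in\mathbb{N}$ with $\mathfrak{a}^nM\cap\overline{\Gamma}_\mathfrak{a}(M)=0$ (resp. $\mathfrak{a}^nM\cap\Gamma_\mathfrak{a}(M)=0$), and of bounded large (resp. small) $\mathfrak{a}$-torsion if there is $n\in\mathbb{N}$ with $\mathfrak{a}^n\overline{\Gamma}_\mathfrak{a}(M)=0$ (resp. $\mathfrak{a}^n\Gamma_\mathfrak{a}(M)=0$). Idempotent means $\mathfrak{a}^2=\mathfrak{a}$. *)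

theory Defs
  imports "HOL-Algebra.Module" "HOL-Algebra.Ideal_Product"
begin

primrec ideal_power :: "('a, 'b) ring_scheme \<Rightarrow> 'a set \<Rightarrow> nat \<Rightarrow> 'a set" where
  "ideal_power R I 0 = carrier R"
| "ideal_power R I (Suc n) = ideal_prod R I (ideal_power R I n)"

definition idempotent_ideal :: "('a, 'b) ring_scheme \<Rightarrow> 'a set \<Rightarrow> bool" where
  "idempotent_ideal R I \<longleftrightarrow> ideal I R \<and> ideal_prod R I I = I"

definition generated_by_idempotents :: "('a, 'b) ring_scheme \<Rightarrow> 'a set \<Rightarrow> bool" where
  "generated_by_idempotents R I \<longleftrightarrow>
     (\<exists>S. S \<subseteq> carrier R \<and> (\<forall>e\<in>S. e \<otimes>\<^bsub>R\<^esub> e = e) \<and> I = genideal R S)"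

definition annihilator :: "('a, 'c) ring_scheme \<Rightarrow> ('a, 'b, 'd) module_scheme \<Rightarrow> 'b \<Rightarrow> 'a set" where
  "annihilator R M x = {r \<in> carrier R. r \<odot>\<^bsub>M\<^esub> x = \<zero>\<^bsub>M\<^esub>}"

definition radical :: "('a, 'b) ring_scheme \<Rightarrow> 'a set \<Rightarrow> 'a set" where
  "radical R J = {r \<in> carrier R. \<exists>n::nat. r [^]\<^bsub>R\<^esub> n \<in> J}"

definition small_torsion :: "('a, 'c) ring_scheme \<Rightarrow> 'a set \<Rightarrow> ('a, 'b, 'd) module_scheme \<Rightarrow> 'b set" where
  "small_torsion R I M = {x \<in> carrier M. \<exists>n::nat. ideal_power R I n \<subseteq> annihilator R M x}"

definition large_torsion :: "('a, 'c) ring_scheme \<Rightarrow> 'a set \<Rightarrow> ('a, 'b, 'd) module_scheme \<Rightarrow> 'b set" where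
  "large_torsion R I M = {x \<in> carrier M. I \<subseteq> radical R (annihilator R M x)}"

definition ideal_smult :: "('a, 'c) ring_scheme \<Rightarrow> 'a set \<Rightarrow> ('a, 'b, 'd) module_scheme \<Rightarrow> 'b set \<Rightarrow> 'b set" where
  "ideal_smult R I M N =
     \<Inter>{L. submodule L R M \<and> {r \<odot>\<^bsub>M\<^esub> x | r x. r \<in> I \<and> x \<in> N} \<subseteq> L}"

definition strongly_bounded_large_torsion ::
  "('a, 'c) ring_scheme \<Rightarrow> 'a set \<Rightarrow> ('a, 'b, 'd) module_scheme \<Rightarrow> bool" where
  "strongly_bounded_large_torsion R I M \<longleftrightarrow>
     (\<exists>n::nat. ideal_smult R (ideal_power R I n) M (carrier M) \<inter> large_torsion R I M = {\<zero>\<^bsub>M\<^esub>})"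

definition strongly_bounded_small_torsion ::
  "('a, 'c) ring_scheme \<Rightarrow> 'a set \<Rightarrow> ('a, 'b, 'd) module_scheme \<Rightarrow> bool" where
  "strongly_bounded_small_torsion R I M \<longleftrightarrow>
     (\<exists>n::nat. ideal_smult R (ideal_power R I n) M (carrier M) \<inter> small_torsion R I M = {\<zero>\<^bsub>M\<^esub>})"

definition bounded_large_torsion ::
  "('a, 'c) ring_scheme \<Rightarrow> 'a set \<Rightarrow> ('a, 'b, 'd) module_scheme \<Rightarrow> bool" where
  "bounded_large_torsion R I M \<longleftrightarrow>
     (\<exists>n::nat. ideal_smult R (ideal_power R I n) M (large_torsion R I M) = {\<zero>\<^bsub>M\<^esub>})"

definition bounded_small_torsion ::
  "('a, 'c) ring_scheme \<Rightarrow> 'a set \<Rightarrow> ('a, 'b, 'd) module_scheme \<Rightarrow> bool" where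
  "bounded_small_torsion R I M \<longleftrightarrow>
     (\<exists>n::nat. ideal_smult R (ideal_power R I n) M (small_torsion R I M) = {\<zero>\<^bsub>M\<^esub>})"

end

theory Submission
  imports Defs "HOL-Library.Poly_Mapping" "HOL-Library.Countable"
begin

text \<open>(a) If \<open>\<aa>\<close> is idempotent then \<open>\<aa>\<^sup>n = \<aa>\<close> for \<open>n \<ge> 1\<close>, so an element killed by a power
  of \<open>\<aa>\<close> is killed by \<open>\<aa>\<close> itself; hence \<open>\<aa> \<Gamma>\<^sub>\<aa>(M) = 0\<close>.
  (b) If \<open>\<aa>\<close> is generated by idempotents, its idempotents are closed under \<open>e\<^sub>1 + e\<^sub>2 - e\<^sub>1 e\<^sub>2\<close>,
  so every \<open>r \<in> \<aa>\<close> satisfies \<open>r = e r\<close> for an idempotent \<open>e \<in> \<aa>\<close>, and hence every \<open>y \<in> \<aa> M\<close>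
  satisfies \<open>y = e y\<close>. If \<open>y\<close> is also large torsion, some power \<open>e\<^sup>k = e\<close> kills \<open>y\<close>, so \<open>y = 0\<close>.
  Counterexamples: \<open>R = \<int>[t\<^sup>q : q \<in> \<rat>, q \<ge> 0] / (t\<^sup>q : q > 1)\<close> and \<open>\<aa> = (t\<^sup>q : q > 0)\<close>.
  Since \<open>t\<^sup>q = (t\<^sup>q\<^sup>/\<^sup>2)\<^sup>2\<close>, \<open>\<aa>\<close> is idempotent. Every element of \<open>\<aa>\<close> is nilpotent, so \<open>1\<close> is large
  torsion. The element \<open>t = t\<^sup>1 \<noteq> 0\<close> lies in every \<open>\<aa>\<^sup>n\<close> and is killed by \<open>\<aa>\<close>, so for every \<open>n\<close> it
  lies both in \<open>\<aa>\<^sup>n\<close> times the large torsion of \<open>R\<close> and in \<open>\<aa>\<^sup>n R \<inter> \<Gamma>\<^sub>\<aa>(R)\<close>.\<close>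

lemma ideal_smult_generator: "r \<in> J \<Longrightarrow> x \<in> N \<Longrightarrow> r \<odot>\<^bsub>M\<^esub> x \<in> ideal_smult R J M N"
  unfolding ideal_smult_def by blast

lemma ideal_smult_least:
  "submodule L R M \<Longrightarrow> (\<And>r x. r \<in> J \<Longrightarrow> x \<in> N \<Longrightarrow> r \<odot>\<^bsub>M\<^esub> x \<in> L) \<Longrightarrow> ideal_smult R J M N \<subseteq> L"
  unfolding ideal_smult_def by blast

lemma zero_in_ideal_smult: "\<zero>\<^bsub>M\<^esub> \<in> ideal_smult R J M N"
  unfolding ideal_smult_def using submodule.axioms(1) subgroup.one_closed by fastforce

lemma (in module) ideal_smult_eq_zero_iff:
  "ideal_smult R J M N = {\<zero>\<^bsub>M\<^esub>} \<longleftrightarrow> (\<forall>r\<in>J. \<forall>x\<in>N. r \<odot>\<^bsub>M\<^esub> x = \<zero>\<^bsub>M\<^esub>)"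
proof
  assume eq: "ideal_smult R J M N = {\<zero>\<^bsub>M\<^esub>}"
  show "\<forall>r\<in>J. \<forall>x\<in>N. r \<odot>\<^bsub>M\<^esub> x = \<zero>\<^bsub>M\<^esub>"
  proof (intro ballI)
    fix r x assume "r \<in> J" "x \<in> N"
    then have "r \<odot>\<^bsub>M\<^esub> x \<in> ideal_smult R J M N"
      by (rule ideal_smult_generator)
    with eq show "r \<odot>\<^bsub>M\<^esub> x = \<zero>\<^bsub>M\<^esub>"
      by simp
  qed
next
  assume "\<forall>r\<in>J. \<forall>x\<in>N. r \<odot>\<^bsub>M\<^esub> x = \<zero>\<^bsub>M\<^esub>"
  moreover have "submodule {\<zero>\<^bsub>M\<^esub>} R M"
    by (rule submoduleI) simp_all
  ultimately have "ideal_smult R J M N \<subseteq> {\<zero>\<^bsub>M\<^esub>}"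
    by (intro ideal_smult_least) simp_all
  then show "ideal_smult R J M N = {\<zero>\<^bsub>M\<^esub>}"
    using zero_in_ideal_smult by blast
qed

lemma (in ring) ideal_power_one: "ideal I R \<Longrightarrow> ideal_power R I 1 = I"
  by (simp add: ideal_prod_one)

lemma (in ring) ideal_power_Suc_idempotent:
  assumes "idempotent_ideal R I"
  shows "ideal_power R I (Suc n) = I"
  using assms by (induction n) (simp_all add: idempotent_ideal_def ideal_prod_one)

lemma (in ring) idempotent_ideal_subset_ideal_power:
  assumes "idempotent_ideal R I"
  shows "I \<subseteq> ideal_power R I n"
proof (cases n)
  case 0
  then show ?thesis using assms by (auto simp: idempotent_ideal_def ideal.Icarr)
next
  case (Suc m)
  then show ?thesis using ideal_power_Suc_idempotent[OF assms] by simp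
qed

lemma bounded_small_torsion_if_idempotent:
  assumes "module R M" and "idempotent_ideal R I"
  shows "bounded_small_torsion R I M"
proof -
  interpret module R M by fact
  have "r \<odot>\<^bsub>M\<^esub> x = \<zero>\<^bsub>M\<^esub>" if r: "r \<in> I" and x: "x \<in> small_torsion R I M" for r x
  proof -
    obtain n where "ideal_power R I n \<subseteq> annihilator R M x"
      using x unfolding small_torsion_def by blast
    then show ?thesis
      using idempotent_ideal_subset_ideal_power[OF assms(2), of n] r
      unfolding annihilator_def by blast
  qed
  then have "ideal_smult R (ideal_power R I 1) M (small_torsion R I M) = {\<zero>\<^bsub>M\<^esub>}"
    using ideal_power_Suc_idempotent[OF assms(2), of 0] by (simp add: ideal_smult_eq_zero_iff)
  then show ?thesis unfolding bounded_small_torsion_def by blast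
qed

abbreviation regular_module :: "('a, 'b) ring_scheme \<Rightarrow> ('a, 'a) module" where
  "regular_module R \<equiv> \<lparr>carrier = carrier R, mult = mult R, one = one R, zero = zero R,
                        add = add R, smult = mult R\<rparr>"

lemma (in cring) module_regular_module: "module R (regular_module R)"
proof -
  have "abelian_group (regular_module R)"
  proof (rule abelian_groupI, goal_cases)
    case (6 x) then show ?case by (intro bexI[of _ "\<ominus> x"]) (auto simp: l_neg)
  qed (auto simp: a_ac)
  then show ?thesis
    by (rule moduleI[OF is_cring]) (auto simp: l_distr r_distr m_assoc)
qed

lemma (in cring) ideal_if_submodule_regular_module:
  assumes "submodule L R (regular_module R)"
  shows "ideal L R"
proof (rule idealI)
  interpret L: submodule L R "regular_module R" by fact
  show "ring R" ..
  show "subgroup L (add_monoid R)"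
    using L.subgroup_axioms unfolding subgroup_def m_inv_def by simp
  show "x \<otimes> a \<in> L" if "a \<in> L" "x \<in> carrier R" for a x
    using L.smult_closed that by simp
  then show "a \<otimes> x \<in> L" if "a \<in> L" "x \<in> carrier R" for a x
    using that L.subset m_comm by force
qed

lemma (in cring) idempotent_join_idempotent:
  assumes e1: "e1 \<in> carrier R" "e1 \<otimes> e1 = e1" and e2: "e2 \<in> carrier R" "e2 \<otimes> e2 = e2"
  shows "(e1 \<oplus> e2 \<ominus> e1 \<otimes> e2) \<otimes> (e1 \<oplus> e2 \<ominus> e1 \<otimes> e2) = e1 \<oplus> e2 \<ominus> e1 \<otimes> e2"
proof -
  have "(e1 \<oplus> e2 \<ominus> e1 \<otimes> e2) \<otimes> (e1 \<oplus> e2 \<ominus> e1 \<otimes> e2)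
      = e1 \<otimes> e1 \<oplus> e2 \<otimes> e2 \<oplus> (e1 \<otimes> e1) \<otimes> (e2 \<otimes> e2) \<oplus> e1 \<otimes> e2 \<oplus> e1 \<otimes> e2
        \<ominus> (e1 \<otimes> e1) \<otimes> e2 \<ominus> (e1 \<otimes> e1) \<otimes> e2 \<ominus> e1 \<otimes> (e2 \<otimes> e2) \<ominus> e1 \<otimes> (e2 \<otimes> e2)"
    using e1(1) e2(1) by algebra
  also have "\<dots> = e1 \<oplus> e2 \<ominus> e1 \<otimes> e2"
    unfolding e1(2) e2(2) using e1(1) e2(1) by algebra
  finally show ?thesis .
qed

lemma (in module) idempotent_join_fixes:
  assumes e1: "e1 \<in> carrier R" and e2: "e2 \<in> carrier R" and y: "y \<in> carrier M"
    and fixed: "e1 \<odot>\<^bsub>M\<^esub> y = y \<or> e2 \<odot>\<^bsub>M\<^esub> y = y"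
  shows "(e1 \<oplus> e2 \<ominus> e1 \<otimes> e2) \<odot>\<^bsub>M\<^esub> y = y"
proof -
  have expand: "(e1 \<oplus> e2 \<ominus> e1 \<otimes> e2) \<odot>\<^bsub>M\<^esub> y
      = e1 \<odot>\<^bsub>M\<^esub> y \<oplus>\<^bsub>M\<^esub> e2 \<odot>\<^bsub>M\<^esub> y \<oplus>\<^bsub>M\<^esub> \<ominus>\<^bsub>M\<^esub> ((e1 \<otimes> e2) \<odot>\<^bsub>M\<^esub> y)"
    using e1 e2 y by (simp add: R.minus_eq smult_l_distr smult_l_minus)
  have cancel: "a \<oplus>\<^bsub>M\<^esub> b \<oplus>\<^bsub>M\<^esub> \<ominus>\<^bsub>M\<^esub> b = a" if "a \<in> carrier M" "b \<in> carrier M" for a b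
    using that by (simp add: M.add.m_assoc M.r_neg)
  from fixed show ?thesis
  proof
    assume fix1: "e1 \<odot>\<^bsub>M\<^esub> y = y"
    have "(e1 \<otimes> e2) \<odot>\<^bsub>M\<^esub> y = e2 \<odot>\<^bsub>M\<^esub> y"
      using e1 e2 y fix1 by (metis m_comm smult_assoc1)
    then have "(e1 \<oplus> e2 \<ominus> e1 \<otimes> e2) \<odot>\<^bsub>M\<^esub> y
        = y \<oplus>\<^bsub>M\<^esub> e2 \<odot>\<^bsub>M\<^esub> y \<oplus>\<^bsub>M\<^esub> \<ominus>\<^bsub>M\<^esub> (e2 \<odot>\<^bsub>M\<^esub> y)"
      by (simp only: expand fix1)
    also have "\<dots> = y"
      using e2 y by (simp add: cancel)
    finally show ?thesis .
  next
    assume fix2: "e2 \<odot>\<^bsub>M\<^esub> y = y"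
    have "(e1 \<otimes> e2) \<odot>\<^bsub>M\<^esub> y = e1 \<odot>\<^bsub>M\<^esub> y"
      using e1 e2 y fix2 by (simp add: smult_assoc1)
    then have "(e1 \<oplus> e2 \<ominus> e1 \<otimes> e2) \<odot>\<^bsub>M\<^esub> y
        = e1 \<odot>\<^bsub>M\<^esub> y \<oplus>\<^bsub>M\<^esub> y \<oplus>\<^bsub>M\<^esub> \<ominus>\<^bsub>M\<^esub> (e1 \<odot>\<^bsub>M\<^esub> y)"
      by (simp only: expand fix2)
    also have "\<dots> = y \<oplus>\<^bsub>M\<^esub> e1 \<odot>\<^bsub>M\<^esub> y \<oplus>\<^bsub>M\<^esub> \<ominus>\<^bsub>M\<^esub> (e1 \<odot>\<^bsub>M\<^esub> y)"
      using e1 y by (simp add: M.add.m_comm[of "e1 \<odot>\<^bsub>M\<^esub> y" y])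
    also have "\<dots> = y"
      using e1 y by (simp add: cancel)
    finally show ?thesis .
  qed
qed

definition idempotent_fixed :: "('a, 'c) ring_scheme \<Rightarrow> 'a set \<Rightarrow> ('a, 'b, 'd) module_scheme \<Rightarrow> 'b set" where
  "idempotent_fixed R I M = {y \<in> carrier M. \<exists>e\<in>I. e \<otimes>\<^bsub>R\<^esub> e = e \<and> e \<odot>\<^bsub>M\<^esub> y = y}"

lemma (in module) submodule_idempotent_fixed:
  assumes I: "ideal I R"
  shows "submodule (idempotent_fixed R I M) R M"
proof (rule submoduleI)
  interpret I: ideal I R by fact
  show "idempotent_fixed R I M \<subseteq> carrier M"
    unfolding idempotent_fixed_def by blast
  show "\<zero>\<^bsub>M\<^esub> \<in> idempotent_fixed R I M"
    unfolding idempotent_fixed_def using I.zero_closed by (auto intro!: bexI[of _ \<zero>])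
  show "\<ominus>\<^bsub>M\<^esub> y \<in> idempotent_fixed R I M" if "y \<in> idempotent_fixed R I M" for y
    using that I.Icarr unfolding idempotent_fixed_def by (force simp: smult_r_minus)
  show "r \<odot>\<^bsub>M\<^esub> y \<in> idempotent_fixed R I M"
    if r: "r \<in> carrier R" and y: "y \<in> idempotent_fixed R I M" for r y
  proof -
    obtain e where "y \<in> carrier M" "e \<in> I" "e \<otimes> e = e" "e \<odot>\<^bsub>M\<^esub> y = y"
      using y unfolding idempotent_fixed_def by blast
    moreover have "e \<odot>\<^bsub>M\<^esub> (r \<odot>\<^bsub>M\<^esub> y) = r \<odot>\<^bsub>M\<^esub> (e \<odot>\<^bsub>M\<^esub> y)"
      using calculation r I.Icarr by (metis m_comm smult_assoc1)
    ultimately show ?thesis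
      using r unfolding idempotent_fixed_def by auto
  qed
  show "y \<oplus>\<^bsub>M\<^esub> z \<in> idempotent_fixed R I M"
    if yz: "y \<in> idempotent_fixed R I M" "z \<in> idempotent_fixed R I M" for y z
  proof -
    obtain e1 e2 where y: "y \<in> carrier M" "e1 \<in> I" "e1 \<otimes> e1 = e1" "e1 \<odot>\<^bsub>M\<^esub> y = y"
      and z: "z \<in> carrier M" "e2 \<in> I" "e2 \<otimes> e2 = e2" "e2 \<odot>\<^bsub>M\<^esub> z = z"
      using yz unfolding idempotent_fixed_def by blast
    let ?e = "e1 \<oplus> e2 \<ominus> e1 \<otimes> e2"
    have "?e \<in> I"
      using y(2) z(2) by (simp add: I.a_closed I.I_r_closed R.minus_eq I.a_inv_closed)
    moreover have "?e \<otimes> ?e = ?e"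
      using y z by (intro idempotent_join_idempotent) auto
    moreover have "?e \<odot>\<^bsub>M\<^esub> y = y" "?e \<odot>\<^bsub>M\<^esub> z = z"
      using y z by (auto intro: idempotent_join_fixes)
    ultimately show ?thesis
      using y z I.Icarr unfolding idempotent_fixed_def by (auto simp: smult_r_distr)
  qed
qed

text \<open>In the regular module the elements fixed by an idempotent of \<open>I\<close> form an ideal; it contains
  the generating idempotents, hence all of \<open>I\<close>.\<close>

lemma (in cring) idempotent_unit_if_generated_by_idempotents:
  assumes "generated_by_idempotents R I" and "a \<in> I"
  shows "\<exists>e\<in>I. e \<otimes> e = e \<and> e \<otimes> a = a"
proof -
  obtain S where S: "S \<subseteq> carrier R" "\<forall>e\<in>S. e \<otimes> e = e" and I: "I = Idl S"
    using assms(1) unfolding generated_by_idempotents_def by blast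
  have "ideal I R" unfolding I using S(1) by (rule genideal_ideal)
  with module_regular_module have "submodule (idempotent_fixed R I (regular_module R)) R (regular_module R)"
    by (rule module.submodule_idempotent_fixed)
  then have "ideal (idempotent_fixed R I (regular_module R)) R"
    by (rule ideal_if_submodule_regular_module)
  moreover have "S \<subseteq> idempotent_fixed R I (regular_module R)"
    using S genideal_self[OF S(1)] unfolding I idempotent_fixed_def by auto
  ultimately have "I \<subseteq> idempotent_fixed R I (regular_module R)"
    unfolding I by (rule genideal_minimal)
  then show ?thesis
    using assms(2) unfolding idempotent_fixed_def by auto
qed

lemma (in module) ideal_smult_subset_idempotent_fixed:
  assumes "generated_by_idempotents R I"
  shows "ideal_smult R I M (carrier M) \<subseteq> idempotent_fixed R I M"
proof (rule ideal_smult_least)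
  have "ideal I R"
    using assms unfolding generated_by_idempotents_def by (auto intro: genideal_ideal)
  then show "submodule (idempotent_fixed R I M) R M"
    by (rule submodule_idempotent_fixed)
  show "r \<odot>\<^bsub>M\<^esub> x \<in> idempotent_fixed R I M" if r: "r \<in> I" and x: "x \<in> carrier M" for r x
  proof -
    obtain e where e: "e \<in> I" "e \<otimes> e = e" "e \<otimes> r = r"
      using idempotent_unit_if_generated_by_idempotents[OF assms r] by blast
    have "e \<in> carrier R" "r \<in> carrier R"
      using e(1) r ideal.Icarr[OF \<open>ideal I R\<close>] by auto
    then have "e \<odot>\<^bsub>M\<^esub> (r \<odot>\<^bsub>M\<^esub> x) = r \<odot>\<^bsub>M\<^esub> x"
      using e(3) x by (simp add: smult_assoc1[symmetric])
    with e x \<open>r \<in> carrier R\<close> show ?thesis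
      unfolding idempotent_fixed_def by auto
  qed
qed

text \<open>Since \<open>e\<^sup>k = e\<close> for \<open>k \<ge> 1\<close>, an idempotent that fixes \<open>y\<close> and is nilpotent on \<open>y\<close> kills \<open>y\<close>.\<close>

lemma (in module) idempotent_fixed_inter_large_torsion:
  "idempotent_fixed R I M \<inter> large_torsion R I M \<subseteq> {\<zero>\<^bsub>M\<^esub>}"
proof
  fix y assume y: "y \<in> idempotent_fixed R I M \<inter> large_torsion R I M"
  then obtain e where e: "e \<in> I" "e \<otimes> e = e" "e \<odot>\<^bsub>M\<^esub> y = y" and "y \<in> carrier M"
    unfolding idempotent_fixed_def by blast
  moreover obtain k where "e \<in> carrier R" "(e [^] (k::nat)) \<odot>\<^bsub>M\<^esub> y = \<zero>\<^bsub>M\<^esub>"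
    using y e(1) unfolding large_torsion_def radical_def annihilator_def by blast
  moreover have "e [^] Suc n = e" if "e \<in> carrier R" for n
    using that e(2) by (induction n) simp_all
  ultimately show "y \<in> {\<zero>\<^bsub>M\<^esub>}"
    by (cases k) auto
qed

lemma (in module) zero_in_large_torsion:
  assumes "I \<subseteq> carrier R"
  shows "\<zero>\<^bsub>M\<^esub> \<in> large_torsion R I M"
proof -
  have "r [^] (1::nat) \<in> annihilator R M \<zero>\<^bsub>M\<^esub>" if "r \<in> carrier R" for r
    using that unfolding annihilator_def by simp
  then show ?thesis
    using assms unfolding large_torsion_def radical_def by blast
qed

lemma strongly_bounded_large_torsion_if_generated_by_idempotents:
  assumes "module R M" and "ideal I R" and "generated_by_idempotents R I"
  shows "strongly_bounded_large_torsion R I M"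
proof -
  interpret module R M by fact
  have "ideal_smult R I M (carrier M) \<inter> large_torsion R I M = {\<zero>\<^bsub>M\<^esub>}"
  proof
    show "ideal_smult R I M (carrier M) \<inter> large_torsion R I M \<subseteq> {\<zero>\<^bsub>M\<^esub>}"
      using ideal_smult_subset_idempotent_fixed[OF assms(3)] idempotent_fixed_inter_large_torsion
      by blast
    show "{\<zero>\<^bsub>M\<^esub>} \<subseteq> ideal_smult R I M (carrier M) \<inter> large_torsion R I M"
      using zero_in_ideal_smult zero_in_large_torsion ideal.Icarr[OF assms(2)] by blast
  qed
  then have "ideal_smult R (ideal_power R I 1) M (carrier M) \<inter> large_torsion R I M = {\<zero>\<^bsub>M\<^esub>}"
    by (simp only: ideal_power_one[OF assms(2)])
  then show ?thesis
    unfolding strongly_bounded_large_torsion_def by blast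
qed

lemma (in cring) not_bounded_large_torsion_regular_module:
  assumes nilpotent: "I \<subseteq> radical R {\<zero>}"
    and u: "\<And>n. u \<in> ideal_power R I n" and "u \<noteq> \<zero>"
  shows "\<not> bounded_large_torsion R I (regular_module R)"
proof
  assume "bounded_large_torsion R I (regular_module R)"
  then obtain n where
    killed: "\<forall>r\<in>ideal_power R I n. \<forall>x\<in>large_torsion R I (regular_module R). r \<otimes> x = \<zero>"
    using module.ideal_smult_eq_zero_iff[OF module_regular_module]
    unfolding bounded_large_torsion_def by auto
  have "radical R {\<zero>} \<subseteq> radical R (annihilator R (regular_module R) \<one>)"
    unfolding radical_def annihilator_def by auto
  then have "\<one> \<in> large_torsion R I (regular_module R)"
    using nilpotent unfolding large_torsion_def by auto
  moreover have "u \<in> carrier R"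
    using u[of 0] by simp
  ultimately have "u \<otimes> \<one> = \<zero>"
    using killed u by blast
  with \<open>u \<in> carrier R\<close> \<open>u \<noteq> \<zero>\<close> show False
    by simp
qed

lemma (in cring) not_strongly_bounded_small_torsion_regular_module:
  assumes "ideal I R" and u: "\<And>n. u \<in> ideal_power R I n"
    and killed: "\<And>r. r \<in> I \<Longrightarrow> r \<otimes> u = \<zero>" and "u \<noteq> \<zero>"
  shows "\<not> strongly_bounded_small_torsion R I (regular_module R)"
proof
  assume "strongly_bounded_small_torsion R I (regular_module R)"
  then obtain n where n: "ideal_smult R (ideal_power R I n) (regular_module R) (carrier R)
      \<inter> small_torsion R I (regular_module R) = {\<zero>}"
    unfolding strongly_bounded_small_torsion_def by auto
  have "u \<in> carrier R"
    using u[of 0] by simp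
  have "ideal_power R I 1 \<subseteq> annihilator R (regular_module R) u"
    using killed ideal.Icarr[OF assms(1)] unfolding ideal_power_one[OF assms(1)] annihilator_def
    by auto
  then have torsion: "u \<in> small_torsion R I (regular_module R)"
    using \<open>u \<in> carrier R\<close> unfolding small_torsion_def by (auto intro!: exI[of _ 1])
  have "u \<otimes> \<one> \<in> ideal_smult R (ideal_power R I n) (regular_module R) (carrier R)"
    using ideal_smult_generator[OF u, of \<one> "carrier R" "regular_module R" R] by simp
  with \<open>u \<in> carrier R\<close> have "u \<in> ideal_smult R (ideal_power R I n) (regular_module R) (carrier R)"
    by simp
  with torsion n \<open>u \<noteq> \<zero>\<close> show False
    by blast
qed

lemma keys_mult_lower_bound:
  fixes p q :: "'a::ordered_cancel_comm_monoid_add \<Rightarrow>\<^sub>0 'b::semiring_0"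
  assumes "\<forall>k\<in>Poly_Mapping.keys p. a \<le> k" and "\<forall>k\<in>Poly_Mapping.keys q. b \<le> k"
    and "k \<in> Poly_Mapping.keys (p * q)"
  shows "a + b \<le> k"
  using keys_mult[of p q] assms by (force intro: add_mono)

lemma keys_mult_strict_lower_bound:
  fixes p q :: "'a::ordered_cancel_comm_monoid_add \<Rightarrow>\<^sub>0 'b::semiring_0"
  assumes "\<forall>k\<in>Poly_Mapping.keys p. a < k" and "\<forall>k\<in>Poly_Mapping.keys q. b \<le> k"
    and "k \<in> Poly_Mapping.keys (p * q)"
  shows "a + b < k"
  using keys_mult[of p q] assms by (force intro: add_less_le_mono)

type_synonym qpoly = "rat \<Rightarrow>\<^sub>0 int"

definition trunc :: "qpoly \<Rightarrow> qpoly" where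
  "trunc p = Poly_Mapping.mapp (\<lambda>k v. if k \<le> 1 then v else 0) p"

lemma lookup_trunc: "Poly_Mapping.lookup (trunc p) k = (if k \<le> 1 then Poly_Mapping.lookup p k else 0)"
  unfolding trunc_def by (simp add: Poly_Mapping.lookup_mapp when_def in_keys_iff)

lemma trunc_add: "trunc (p + q) = trunc p + trunc q"
  by (rule poly_mapping_eqI) (simp add: lookup_trunc lookup_add)

lemma keys_trunc: "Poly_Mapping.keys (trunc p) = Poly_Mapping.keys p \<inter> {..1}"
  by (auto simp: in_keys_iff lookup_trunc split: if_splits)

lemma trunc_eq_self: "Poly_Mapping.keys p \<subseteq> {..1} \<Longrightarrow> trunc p = p"
  by (rule poly_mapping_eqI) (auto simp: lookup_trunc in_keys_iff)

lemma trunc_eq_0: "Poly_Mapping.keys p \<subseteq> {1<..} \<Longrightarrow> trunc p = 0"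
  by (rule poly_mapping_eqI) (auto simp: lookup_trunc in_keys_iff)

lemma trunc_mult_trunc_left:
  assumes "\<forall>k\<in>Poly_Mapping.keys p. 0 \<le> k" and "\<forall>k\<in>Poly_Mapping.keys q. 0 \<le> k"
  shows "trunc (trunc p * q) = trunc (p * q)"
proof -
  have "\<forall>k\<in>Poly_Mapping.keys (p - trunc p). 1 < k"
    by (auto simp: in_keys_iff lookup_trunc lookup_minus split: if_splits)
  then have "trunc ((p - trunc p) * q) = 0"
    using keys_mult_strict_lower_bound[of "p - trunc p" 1 q 0] assms(2)
    by (intro trunc_eq_0) auto
  moreover have "p * q = trunc p * q + (p - trunc p) * q"
    by (simp add: algebra_simps)
  ultimately show ?thesis
    by (simp add: trunc_add)
qed

definition trunc_carrier :: "qpoly set" where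
  "trunc_carrier = {p. Poly_Mapping.keys p \<subseteq> {0..1}}"

definition trunc_positive :: "qpoly set" where
  "trunc_positive = {p. Poly_Mapping.keys p \<subseteq> {0<..1}}"

lemma trunc_carrier_add: "p \<in> trunc_carrier \<Longrightarrow> q \<in> trunc_carrier \<Longrightarrow> p + q \<in> trunc_carrier"
  using keys_add[of p q] unfolding trunc_carrier_def by blast

lemma trunc_positive_add: "p \<in> trunc_positive \<Longrightarrow> q \<in> trunc_positive \<Longrightarrow> p + q \<in> trunc_positive"
  using keys_add[of p q] unfolding trunc_positive_def by blast

lemma trunc_positive_subset_carrier: "trunc_positive \<subseteq> trunc_carrier"
  unfolding trunc_positive_def trunc_carrier_def by auto

lemma trunc_eq_self_if_carrier: "p \<in> trunc_carrier \<Longrightarrow> trunc p = p"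
  unfolding trunc_carrier_def by (intro trunc_eq_self) auto

lemma trunc_mult_in_carrier:
  assumes "p \<in> trunc_carrier" and "q \<in> trunc_carrier"
  shows "trunc (p * q) \<in> trunc_carrier"
proof -
  have "0 + 0 \<le> k" if "k \<in> Poly_Mapping.keys (p * q)" for k
    by (rule keys_mult_lower_bound[OF _ _ that]) (use assms in \<open>auto simp: trunc_carrier_def\<close>)
  then show ?thesis
    unfolding trunc_carrier_def by (auto simp: keys_trunc)
qed

lemma trunc_mult_in_positive:
  assumes "p \<in> trunc_positive" and "q \<in> trunc_carrier"
  shows "trunc (p * q) \<in> trunc_positive"
proof -
  have "0 + 0 < k" if "k \<in> Poly_Mapping.keys (p * q)" for k
    by (rule keys_mult_strict_lower_bound[OF _ _ that])
      (use assms in \<open>auto simp: trunc_positive_def trunc_carrier_def\<close>)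
  then show ?thesis
    unfolding trunc_positive_def by (auto simp: keys_trunc)
qed

lemma trunc_mult_assoc:
  assumes "p \<in> trunc_carrier" and "q \<in> trunc_carrier" and "r \<in> trunc_carrier"
  shows "trunc (trunc (p * q) * r) = trunc (p * trunc (q * r))"
proof -
  have nonneg: "\<forall>k\<in>Poly_Mapping.keys s. 0 \<le> k" if "s \<in> trunc_carrier" for s
    using that unfolding trunc_carrier_def by auto
  have "\<forall>k\<in>Poly_Mapping.keys (s * s'). 0 \<le> k"
    if "s \<in> trunc_carrier" "s' \<in> trunc_carrier" for s s'
    using keys_mult_lower_bound[of s 0 s' 0] nonneg that by auto
  then have "trunc (trunc (p * q) * r) = trunc (p * q * r)"
    and "trunc (trunc (q * r) * p) = trunc (q * r * p)"
    using assms nonneg by (simp_all add: trunc_mult_trunc_left)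
  then show ?thesis
    by (simp add: ac_simps)
qed

text \<open>The counterexamples must live on the carrier type \<open>nat set\<close>; \<open>encode\<close> embeds the countable
  type \<open>qpoly\<close> into it.\<close>

definition encode :: "qpoly \<Rightarrow> nat set" where
  "encode p = {to_nat (Poly_Mapping.items p)}"

definition decode :: "nat set \<Rightarrow> qpoly" where
  "decode X = Poly_Mapping.the_value (from_nat (the_elem X))"

lemma decode_encode [simp]: "decode (encode p) = p"
  unfolding encode_def decode_def by simp

lemma encode_inject [simp]: "encode p = encode q \<longleftrightarrow> p = q"
  by (metis decode_encode)

text \<open>The ring \<open>\<int>[t\<^sup>q : q \<in> \<rat>, q \<ge> 0] / (t\<^sup>q : q > 1)\<close>, with \<open>t\<^sup>q\<close> represented by
  \<open>Poly_Mapping.single q 1\<close> and the quotient realised by \<open>trunc\<close>.\<close>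

definition trunc_ring :: "nat set ring" where
  "trunc_ring = \<lparr>carrier = encode ` trunc_carrier, mult = (\<lambda>x y. encode (trunc (decode x * decode y))),
                  one = encode 1, zero = encode 0, add = (\<lambda>x y. encode (decode x + decode y))\<rparr>"

lemma trunc_ring_simps [simp]:
  "carrier trunc_ring = encode ` trunc_carrier"
  "x \<otimes>\<^bsub>trunc_ring\<^esub> y = encode (trunc (decode x * decode y))"
  "\<one>\<^bsub>trunc_ring\<^esub> = encode 1"
  "\<zero>\<^bsub>trunc_ring\<^esub> = encode 0"
  "x \<oplus>\<^bsub>trunc_ring\<^esub> y = encode (decode x + decode y)"
  unfolding trunc_ring_def by simp_all

lemma cring_trunc_ring: "cring trunc_ring"
proof (rule cringI)
  show "abelian_group trunc_ring"
  proof (rule abelian_groupI)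
    show "x \<oplus>\<^bsub>trunc_ring\<^esub> y \<in> carrier trunc_ring"
      if "x \<in> carrier trunc_ring" "y \<in> carrier trunc_ring" for x y
      using that by (auto intro!: imageI trunc_carrier_add)
    have "0 \<in> trunc_carrier"
      unfolding trunc_carrier_def by simp
    then show "\<zero>\<^bsub>trunc_ring\<^esub> \<in> carrier trunc_ring"
      by simp
    show "x \<oplus>\<^bsub>trunc_ring\<^esub> y \<oplus>\<^bsub>trunc_ring\<^esub> z = x \<oplus>\<^bsub>trunc_ring\<^esub> (y \<oplus>\<^bsub>trunc_ring\<^esub> z)"
      and "x \<oplus>\<^bsub>trunc_ring\<^esub> y = y \<oplus>\<^bsub>trunc_ring\<^esub> x" for x y z
      by (simp_all add: add_ac)
    show "\<zero>\<^bsub>trunc_ring\<^esub> \<oplus>\<^bsub>trunc_ring\<^esub> x = x" if "x \<in> carrier trunc_ring" for x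
      using that by auto
    show "\<exists>y\<in>carrier trunc_ring. y \<oplus>\<^bsub>trunc_ring\<^esub> x = \<zero>\<^bsub>trunc_ring\<^esub>"
      if x: "x \<in> carrier trunc_ring" for x
    proof -
      obtain p where "p \<in> trunc_carrier" "x = encode p"
        using x by auto
      then show ?thesis
        by (intro bexI[of _ "encode (- p)"]) (auto simp: trunc_carrier_def)
    qed
  qed
  show "comm_monoid trunc_ring"
  proof (rule comm_monoidI)
    show "x \<otimes>\<^bsub>trunc_ring\<^esub> y \<in> carrier trunc_ring"
      if "x \<in> carrier trunc_ring" "y \<in> carrier trunc_ring" for x y
      using that trunc_mult_in_carrier by auto
    have "1 \<in> trunc_carrier"
      unfolding trunc_carrier_def by simp
    then show "\<one>\<^bsub>trunc_ring\<^esub> \<in> carrier trunc_ring"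
      by simp
    show "x \<otimes>\<^bsub>trunc_ring\<^esub> y \<otimes>\<^bsub>trunc_ring\<^esub> z = x \<otimes>\<^bsub>trunc_ring\<^esub> (y \<otimes>\<^bsub>trunc_ring\<^esub> z)"
      if xyz: "x \<in> carrier trunc_ring" "y \<in> carrier trunc_ring" "z \<in> carrier trunc_ring"
      for x y z
    proof -
      obtain p q r where "p \<in> trunc_carrier" "q \<in> trunc_carrier" "r \<in> trunc_carrier"
        and "x = encode p" "y = encode q" "z = encode r"
        using xyz by auto
      then show ?thesis
        by (simp add: trunc_mult_assoc)
    qed
    show "\<one>\<^bsub>trunc_ring\<^esub> \<otimes>\<^bsub>trunc_ring\<^esub> x = x" if "x \<in> carrier trunc_ring" for x
      using that by (auto simp: trunc_eq_self_if_carrier)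
    show "x \<otimes>\<^bsub>trunc_ring\<^esub> y = y \<otimes>\<^bsub>trunc_ring\<^esub> x" for x y
      by (simp add: mult.commute)
  qed
qed (auto simp: distrib_right trunc_add)

lemma trunc_ring_minus:
  assumes "p \<in> trunc_carrier"
  shows "\<ominus>\<^bsub>trunc_ring\<^esub> encode p = encode (- p)"
proof -
  interpret cring trunc_ring by (rule cring_trunc_ring)
  show ?thesis
    using assms by (intro minus_equality) (auto simp: trunc_carrier_def)
qed

definition trunc_ring_ideal :: "nat set set" where
  "trunc_ring_ideal = encode ` trunc_positive"

lemma ideal_trunc_ring_ideal: "ideal trunc_ring_ideal trunc_ring"
proof -
  interpret cring trunc_ring by (rule cring_trunc_ring)
  show ?thesis
  proof (rule idealI)
    show "ring trunc_ring" ..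
    show "subgroup trunc_ring_ideal (add_monoid trunc_ring)"
    proof (rule add.subgroupI, goal_cases)
      case 1
      then show ?case
        using trunc_positive_subset_carrier unfolding trunc_ring_ideal_def by auto
    next
      case 2
      then show ?case
        unfolding trunc_ring_ideal_def trunc_positive_def by blast
    next
      case (3 a)
      then show ?case
        using trunc_positive_subset_carrier unfolding trunc_ring_ideal_def a_inv_def[symmetric]
        by (auto simp: trunc_ring_minus trunc_positive_def)
    next
      case (4 a b)
      then show ?case
        unfolding trunc_ring_ideal_def by (auto intro!: imageI trunc_positive_add)
    qed
    show "x \<otimes>\<^bsub>trunc_ring\<^esub> a \<in> trunc_ring_ideal"
      and "a \<otimes>\<^bsub>trunc_ring\<^esub> x \<in> trunc_ring_ideal"
      if "a \<in> trunc_ring_ideal" "x \<in> carrier trunc_ring" for a x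
      using that trunc_mult_in_positive unfolding trunc_ring_ideal_def
      by (auto simp: mult.commute)
  qed
qed

text \<open>Every \<open>p\<close> with positive exponents is divisible by \<open>t\<^sup>h\<close>, for \<open>h\<close> half its least
  exponent, with a quotient that still has positive exponents.\<close>

lemma trunc_positive_split:
  assumes p: "p \<in> trunc_positive"
  shows "\<exists>a\<in>trunc_positive. \<exists>b\<in>trunc_positive. trunc (a * b) = p"
proof (cases "p = 0")
  case True
  then show ?thesis
    by (intro bexI[of _ 0]) (auto simp: trunc_positive_def trunc_eq_self)
next
  case False
  define h where "h = Min (Poly_Mapping.keys p) / 2"
  have keys: "Poly_Mapping.keys p \<subseteq> {0<..1}"
    using p unfolding trunc_positive_def by simp
  have "2 * h \<in> Poly_Mapping.keys p" and min: "\<forall>k\<in>Poly_Mapping.keys p. 2 * h \<le> k"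
    using False unfolding h_def by auto
  then have "2 * h \<in> {0<..1}"
    using keys by blast
  with min have h: "0 < h" "h \<le> 1" "\<forall>k\<in>Poly_Mapping.keys p. 2 * h \<le> k"
    by auto
  define a where "a = p * Poly_Mapping.single (- h) (1::int)"
  define b where "b = Poly_Mapping.single h (1::int)"
  have "b \<in> trunc_positive"
    using h unfolding b_def trunc_positive_def by simp
  moreover have "a \<in> trunc_positive"
  proof -
    have "k \<in> {0<..1}" if k: "k \<in> Poly_Mapping.keys a" for k
    proof -
      obtain x where "k = x - h" "x \<in> Poly_Mapping.keys p"
        using keys_mult[of p "Poly_Mapping.single (- h) (1::int)"] k unfolding a_def by auto
      then show ?thesis
        using keys h by force
    qed
    then show ?thesis
      unfolding trunc_positive_def by auto
  qed
  moreover have "trunc (a * b) = p"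
  proof -
    have "a * b = p"
      unfolding a_def b_def by (simp add: mult.assoc mult_single)
    then show ?thesis
      using p trunc_positive_subset_carrier trunc_eq_self_if_carrier by auto
  qed
  ultimately show ?thesis
    by blast
qed

lemma idempotent_trunc_ring_ideal: "idempotent_ideal trunc_ring trunc_ring_ideal"
proof -
  interpret cring trunc_ring by (rule cring_trunc_ring)
  have "trunc_ring_ideal \<subseteq> ideal_prod trunc_ring trunc_ring_ideal trunc_ring_ideal"
  proof
    fix x assume "x \<in> trunc_ring_ideal"
    then obtain a b where "a \<in> trunc_positive" "b \<in> trunc_positive" "x = encode (trunc (a * b))"
      using trunc_positive_split unfolding trunc_ring_ideal_def by force
    then show "x \<in> ideal_prod trunc_ring trunc_ring_ideal trunc_ring_ideal"
      using ideal_prod.prod[of "encode a" trunc_ring_ideal "encode b" trunc_ring_ideal trunc_ring]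
      unfolding trunc_ring_ideal_def by simp
  qed
  then show ?thesis
    using ideal_prod_inter[OF ideal_trunc_ring_ideal ideal_trunc_ring_ideal] ideal_trunc_ring_ideal
    unfolding idempotent_ideal_def by auto
qed

primrec trunc_power :: "qpoly \<Rightarrow> nat \<Rightarrow> qpoly" where
  "trunc_power p 0 = 1"
| "trunc_power p (Suc n) = trunc (trunc_power p n * p)"

lemma trunc_ring_pow: "encode p [^]\<^bsub>trunc_ring\<^esub> n = encode (trunc_power p n)"
  by (induction n) simp_all

lemma keys_trunc_power_lower_bound:
  assumes "\<forall>k\<in>Poly_Mapping.keys p. q \<le> k"
  shows "\<forall>k\<in>Poly_Mapping.keys (trunc_power p n). of_nat n * q \<le> k"
proof (induction n)
  case 0
  then show ?case by simp
next
  case (Suc n)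
  have "of_nat n * q + q \<le> k" if "k \<in> Poly_Mapping.keys (trunc_power p n * p)" for k
    using keys_mult_lower_bound[OF Suc.IH assms that] .
  moreover have "of_nat (Suc n) * q = of_nat n * q + q"
    by (simp add: algebra_simps)
  ultimately show ?case
    by (simp add: keys_trunc)
qed

lemma keys_trunc_power_upper_bound: "k \<in> Poly_Mapping.keys (trunc_power p n) \<Longrightarrow> k \<le> 1"
  by (cases n) (simp_all add: keys_trunc)

text \<open>A positive least exponent \<open>q\<close> forces \<open>p\<^sup>n\<close> into degrees \<open>\<ge> n q > 1\<close>.\<close>

lemma trunc_power_eventually_0:
  assumes "p \<in> trunc_positive"
  shows "\<exists>n. trunc_power p n = 0"
proof -
  obtain q :: rat where q: "0 < q" "\<forall>k\<in>Poly_Mapping.keys p. q \<le> k"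
  proof (cases "p = 0")
    case True
    then show ?thesis using that[of 1] by simp
  next
    case False
    then have "Min (Poly_Mapping.keys p) \<in> Poly_Mapping.keys p"
      by simp
    then show ?thesis
      using that[of "Min (Poly_Mapping.keys p)"] assms unfolding trunc_positive_def by auto
  qed
  obtain n where n: "1 < of_nat n * q"
    using ex_less_of_nat_mult[OF q(1)] by blast
  have "k \<notin> Poly_Mapping.keys (trunc_power p n)" for k
  proof
    assume "k \<in> Poly_Mapping.keys (trunc_power p n)"
    then have "of_nat n * q \<le> k" "k \<le> 1"
      using keys_trunc_power_lower_bound[OF q(2), of n] keys_trunc_power_upper_bound by auto
    with n show False
      by linarith
  qed
  then have "Poly_Mapping.keys (trunc_power p n) = {}"
    by blast
  then show ?thesis
    by auto
qed

lemma trunc_ring_ideal_nilpotent: "trunc_ring_ideal \<subseteq> radical trunc_ring {\<zero>\<^bsub>trunc_ring\<^esub>}"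
proof
  fix x assume "x \<in> trunc_ring_ideal"
  then obtain p where p: "p \<in> trunc_positive" "x = encode p"
    unfolding trunc_ring_ideal_def by blast
  moreover obtain n where "trunc_power p n = 0"
    using trunc_power_eventually_0[OF p(1)] by blast
  ultimately have "x \<in> carrier trunc_ring" "x [^]\<^bsub>trunc_ring\<^esub> n = \<zero>\<^bsub>trunc_ring\<^esub>"
    using trunc_positive_subset_carrier by (auto simp: trunc_ring_pow)
  then show "x \<in> radical trunc_ring {\<zero>\<^bsub>trunc_ring\<^esub>}"
    unfolding radical_def by blast
qed

definition top_monomial :: qpoly where
  "top_monomial = Poly_Mapping.single 1 1"

lemma top_monomial_in_ideal: "encode top_monomial \<in> trunc_ring_ideal"
  unfolding trunc_ring_ideal_def trunc_positive_def top_monomial_def by auto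

lemma top_monomial_nonzero: "encode top_monomial \<noteq> \<zero>\<^bsub>trunc_ring\<^esub>"
  unfolding top_monomial_def by simp

lemma trunc_ring_ideal_annihilates_top_monomial:
  assumes "r \<in> trunc_ring_ideal"
  shows "r \<otimes>\<^bsub>trunc_ring\<^esub> encode top_monomial = \<zero>\<^bsub>trunc_ring\<^esub>"
proof -
  obtain p where p: "p \<in> trunc_positive" "r = encode p"
    using assms unfolding trunc_ring_ideal_def by blast
  have "\<forall>k\<in>Poly_Mapping.keys top_monomial. 1 \<le> k"
    unfolding top_monomial_def by simp
  then have "trunc (p * top_monomial) = 0"
    using keys_mult_strict_lower_bound[of p 0 top_monomial 1] p(1)
    unfolding trunc_positive_def by (intro trunc_eq_0) force
  then show ?thesis
    using p by simp
qed

theorem proposition7p5: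
  shows
   "((\<forall>(R::'r ring) (I::'r set) (M::('r, 'm) module).
        module R M \<and> idempotent_ideal R I \<longrightarrow> bounded_small_torsion R I M)
     \<and> (\<exists>(R::nat set ring) (I::nat set set) (M::(nat set, nat set) module).
        module R M \<and> idempotent_ideal R I \<and> \<not> bounded_large_torsion R I M)
     \<and> (\<exists>(R::nat set ring) (I::nat set set).
        cring R \<and> idempotent_ideal R I \<and>
        \<not> strongly_bounded_small_torsion R I
            \<lparr>carrier = carrier R, mult = mult R, one = one R, zero = zero R,
             add = add R, smult = mult R\<rparr>))
    \<and> (\<forall>(R::'r ring) (I::'r set) (M::('r, 'm) module).
        module R M \<and> ideal I R \<and> generated_by_idempotents R I \<longrightarrow>
        strongly_bounded_large_torsion R I M)"
proof -
  interpret T: cring trunc_ring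
    by (rule cring_trunc_ring)
  have top: "encode top_monomial \<in> ideal_power trunc_ring trunc_ring_ideal n" for n
    using T.idempotent_ideal_subset_ideal_power[OF idempotent_trunc_ring_ideal] top_monomial_in_ideal
    by blast
  have "\<not> bounded_large_torsion trunc_ring trunc_ring_ideal (regular_module trunc_ring)"
    using trunc_ring_ideal_nilpotent top top_monomial_nonzero
    by (rule T.not_bounded_large_torsion_regular_module)
  moreover have "\<not> strongly_bounded_small_torsion trunc_ring trunc_ring_ideal (regular_module trunc_ring)"
    using ideal_trunc_ring_ideal top trunc_ring_ideal_annihilates_top_monomial top_monomial_nonzero
    by (rule T.not_strongly_bounded_small_torsion_regular_module)
  ultimately show ?thesis
    using bounded_small_torsion_if_idempotent strongly_bounded_large_torsion_if_generated_by_idempotents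
      T.module_regular_module cring_trunc_ring idempotent_trunc_ring_ideal
    by blast
qed

end
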